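(* Let $M=(\mathbf{K}^{\mathbf{n}},\rho)$ be a sum-matroid of rank $k=\rho(\mathbf{K}^{\mathbf{n}})$, let $M^*=(\mathbf{K}^{\mathbf{n}},\rho^* )$ be its dual, and let $n=n_1+\cdots+n_\ell$. Let $d_i=d^S_i(M)$ for $i=1,\dots,n-k$ and $d_j^\perp=d^S_j(M^* )$ for $j=1,\dots,k$. Then $$\{1,2,\dots,n\}=\{d_1^\perp,\dots,d_k^\perp\}\cup\{n+1-d_1,\dots,n+1-d_{n-k}\},$$ and the union is disjoint. In particular, the generalized weights of $M$ uniquely determine those of $M^*$.
   Context: $\ell,n_1,\dots,n_\ell$ positive integers, $K_1,\dots,K_\ell$ finite fields. $\mathcal{P}(\mathbf{K}^{\mathbf{n}})=\mathcal{P}(K_1^{n_1})\times\cdots\times\mathcal{P}(K_\ell^{n_\ell})$, $\mathcal{P}(K_i^{n_i})$ the lattice of $K_i$-subspaces of $K_i^{n_i}$, with componentwise inclusion, sum, intersection, and orthogonal complement $\mathcal{L}^\perp$ (w.r.t. the standard bilinear form on each $K_i^{n_i}$); $\mathrm{Rk}(\mathcal{L})=\sum_i\dim_{K_i}\mathcal{L}_i$; $\mathbf{K}^{\mathbf{n}}=(K_1^{n_1},\dots,K_\ell^{n_\ell})$. A sum-matroid is $(\mathbf{K}^{\mathbf{n}},\rho)$ with $\rho:\mathcal{P}(\mathbf{K}^{\mathbf{n}})\to\mathbb{Z}_{\ge0}$ satisfying (R1) $0\le\rho(\mathcal{L})\le\mathrm{Rk}(\mathcal{L})$; (R2) $\mathcal{L}\subseteq\mathcal{L}'\Rightarrow\rho(\mathcal{L})\le\rho(\mathcal{L}')$;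 (R3) $\rho(\mathcal{L}+\mathcal{L}')+\rho(\mathcal{L}\cap\mathcal{L}')\le\rho(\mathcal{L})+\rho(\mathcal{L}')$. The dual $M^*$ has rank function $\rho^*(\mathcal{L})=\rho(\mathcal{L}^\perp)+\mathrm{Rk}(\mathcal{L})-\rho(\mathbf{K}^{\mathbf{n}})$. For a sum-matroid with rank function $\rho$, nullity is $\eta(\mathcal{L})=\mathrm{Rk}(\mathcal{L})-\rho(\mathcal{L})$, and the $i$-th generalized weight is $d^S_i=\min\{\mathrm{Rk}(\mathcal{L}):\mathcal{L}\in\mathcal{P}(\mathbf{K}^{\mathbf{n}}),\ \eta(\mathcal{L})=i\}$ for $i=1,\dots,\eta(\mathbf{K}^{\mathbf{n}})$. *)

theory Defs
  imports "HOL-Algebra.Ring"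
begin

text \<open>A family of finite fields K 0, ..., K (l-1), represented as HOL-Algebra
  field records over a common carrier type, and dimensions ns 0, ..., ns (l-1).
  A vector of K_i^{n_i} is a function v :: nat => 'a with v j in carrier (K i) for j < n_i
  and v j = 0 for j >= n_i.  An element of P(K^n) is a family L :: nat => (nat => 'a) set
  with L i a subspace of K_i^{n_i} for i < l and L i = {} for i >= l (canonical padding).\<close>

definition vecs :: "(nat \<Rightarrow> 'a ring) \<Rightarrow> (nat \<Rightarrow> nat) \<Rightarrow> nat \<Rightarrow> (nat \<Rightarrow> 'a) set" where
  "vecs K ns i = {v. (\<forall>j<ns i. v j \<in> carrier (K i)) \<and> (\<forall>j\<ge>ns i. v j = \<zero>\<^bsub>K i\<^esub>)}"

definition zvec :: "(nat \<Rightarrow> 'a ring) \<Rightarrow> nat \<Rightarrow> (nat \<Rightarrow> 'a)" where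
  "zvec K i = (\<lambda>j. \<zero>\<^bsub>K i\<^esub>)"

definition vadd :: "(nat \<Rightarrow> 'a ring) \<Rightarrow> nat \<Rightarrow> (nat \<Rightarrow> 'a) \<Rightarrow> (nat \<Rightarrow> 'a) \<Rightarrow> (nat \<Rightarrow> 'a)" where
  "vadd K i v w = (\<lambda>j. v j \<oplus>\<^bsub>K i\<^esub> w j)"

definition vsmult :: "(nat \<Rightarrow> 'a ring) \<Rightarrow> nat \<Rightarrow> 'a \<Rightarrow> (nat \<Rightarrow> 'a) \<Rightarrow> (nat \<Rightarrow> 'a)" where
  "vsmult K i c v = (\<lambda>j. c \<otimes>\<^bsub>K i\<^esub> v j)"

definition is_subspace :: "(nat \<Rightarrow> 'a ring) \<Rightarrow> (nat \<Rightarrow> nat) \<Rightarrow> nat \<Rightarrow> (nat \<Rightarrow> 'a) set \<Rightarrow> bool" where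
  "is_subspace K ns i W \<longleftrightarrow> W \<subseteq> vecs K ns i \<and> zvec K i \<in> W \<and>
     (\<forall>v\<in>W. \<forall>w\<in>W. vadd K i v w \<in> W) \<and>
     (\<forall>c\<in>carrier (K i). \<forall>v\<in>W. vsmult K i c v \<in> W)"

definition vspan :: "(nat \<Rightarrow> 'a ring) \<Rightarrow> nat \<Rightarrow> (nat \<Rightarrow> 'a) set \<Rightarrow> (nat \<Rightarrow> 'a) set" where
  "vspan K i B = {v. \<exists>c \<in> B \<rightarrow> carrier (K i). \<forall>j. v j = finsum (K i) (\<lambda>b. c b \<otimes>\<^bsub>K i\<^esub> b j) B}"

definition vdim :: "(nat \<Rightarrow> 'a ring) \<Rightarrow> nat \<Rightarrow> (nat \<Rightarrow> 'a) set \<Rightarrow> nat" where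
  "vdim K i W = (LEAST d. \<exists>B. finite B \<and> B \<subseteq> W \<and> card B = d \<and> vspan K i B = W)"

definition vperp :: "(nat \<Rightarrow> 'a ring) \<Rightarrow> (nat \<Rightarrow> nat) \<Rightarrow> nat \<Rightarrow> (nat \<Rightarrow> 'a) set \<Rightarrow> (nat \<Rightarrow> 'a) set" where
  "vperp K ns i W = {v \<in> vecs K ns i. \<forall>w\<in>W.
      finsum (K i) (\<lambda>j. v j \<otimes>\<^bsub>K i\<^esub> w j) {..<ns i} = \<zero>\<^bsub>K i\<^esub>}"

definition Lat :: "(nat \<Rightarrow> 'a ring) \<Rightarrow> nat \<Rightarrow> (nat \<Rightarrow> nat) \<Rightarrow> (nat \<Rightarrow> (nat \<Rightarrow> 'a) set) set" where
  "Lat K l ns = {L. (\<forall>i<l. is_subspace K ns i (L i)) \<and> (\<forall>i\<ge>l. L i = {})}"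

definition fullspace :: "(nat \<Rightarrow> 'a ring) \<Rightarrow> nat \<Rightarrow> (nat \<Rightarrow> nat) \<Rightarrow> nat \<Rightarrow> (nat \<Rightarrow> 'a) set" where
  "fullspace K l ns = (\<lambda>i. if i < l then vecs K ns i else {})"

definition lsum :: "(nat \<Rightarrow> 'a ring) \<Rightarrow> nat \<Rightarrow> (nat \<Rightarrow> (nat \<Rightarrow> 'a) set) \<Rightarrow> (nat \<Rightarrow> (nat \<Rightarrow> 'a) set) \<Rightarrow> nat \<Rightarrow> (nat \<Rightarrow> 'a) set" where
  "lsum K l L L' = (\<lambda>i. if i < l then {vadd K i v w | v w. v \<in> L i \<and> w \<in> L' i} else {})"

definition linter :: "(nat \<Rightarrow> (nat \<Rightarrow> 'a) set) \<Rightarrow> (nat \<Rightarrow> (nat \<Rightarrow> 'a) set) \<Rightarrow> nat \<Rightarrow> (nat \<Rightarrow> 'a) set" where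
  "linter L L' = (\<lambda>i. L i \<inter> L' i)"

definition lle :: "(nat \<Rightarrow> (nat \<Rightarrow> 'a) set) \<Rightarrow> (nat \<Rightarrow> (nat \<Rightarrow> 'a) set) \<Rightarrow> bool" where
  "lle L L' \<longleftrightarrow> (\<forall>i. L i \<subseteq> L' i)"

definition lperp :: "(nat \<Rightarrow> 'a ring) \<Rightarrow> nat \<Rightarrow> (nat \<Rightarrow> nat) \<Rightarrow> (nat \<Rightarrow> (nat \<Rightarrow> 'a) set) \<Rightarrow> nat \<Rightarrow> (nat \<Rightarrow> 'a) set" where
  "lperp K l ns L = (\<lambda>i. if i < l then vperp K ns i (L i) else {})"

definition Rk :: "(nat \<Rightarrow> 'a ring) \<Rightarrow> nat \<Rightarrow> (nat \<Rightarrow> (nat \<Rightarrow> 'a) set) \<Rightarrow> nat" where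
  "Rk K l L = (\<Sum>i<l. vdim K i (L i))"

text \<open>Sum-matroid axioms (R1)-(R3); nonnegativity is automatic for nat values.\<close>
definition sum_matroid :: "(nat \<Rightarrow> 'a ring) \<Rightarrow> nat \<Rightarrow> (nat \<Rightarrow> nat) \<Rightarrow> ((nat \<Rightarrow> (nat \<Rightarrow> 'a) set) \<Rightarrow> nat) \<Rightarrow> bool" where
  "sum_matroid K l ns \<rho> \<longleftrightarrow>
     (\<forall>L\<in>Lat K l ns. \<rho> L \<le> Rk K l L) \<and>
     (\<forall>L\<in>Lat K l ns. \<forall>L'\<in>Lat K l ns. lle L L' \<longrightarrow> \<rho> L \<le> \<rho> L') \<and>
     (\<forall>L\<in>Lat K l ns. \<forall>L'\<in>Lat K l ns.
        \<rho> (lsum K l L L') + \<rho> (linter L L') \<le> \<rho> L + \<rho> L')"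

text \<open>Dual rank function (the value is always nonnegative for a sum-matroid, so nat
  subtraction does not truncate).\<close>
definition dual_rank :: "(nat \<Rightarrow> 'a ring) \<Rightarrow> nat \<Rightarrow> (nat \<Rightarrow> nat) \<Rightarrow> ((nat \<Rightarrow> (nat \<Rightarrow> 'a) set) \<Rightarrow> nat)
    \<Rightarrow> (nat \<Rightarrow> (nat \<Rightarrow> 'a) set) \<Rightarrow> nat" where
  "dual_rank K l ns \<rho> L = \<rho> (lperp K l ns L) + Rk K l L - \<rho> (fullspace K l ns)"

definition nullity :: "(nat \<Rightarrow> 'a ring) \<Rightarrow> nat \<Rightarrow> ((nat \<Rightarrow> (nat \<Rightarrow> 'a) set) \<Rightarrow> nat)
    \<Rightarrow> (nat \<Rightarrow> (nat \<Rightarrow> 'a) set) \<Rightarrow> nat" where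
  "nullity K l \<rho> L = Rk K l L - \<rho> L"

definition gen_weight :: "(nat \<Rightarrow> 'a ring) \<Rightarrow> nat \<Rightarrow> (nat \<Rightarrow> nat) \<Rightarrow> ((nat \<Rightarrow> (nat \<Rightarrow> 'a) set) \<Rightarrow> nat)
    \<Rightarrow> nat \<Rightarrow> nat" where
  "gen_weight K l ns \<rho> i = Min {Rk K l L | L. L \<in> Lat K l ns \<and> nullity K l \<rho> L = i}"

end

theory Submission
  imports Defs "Jordan_Normal_Form.Missing_VectorSpace"
begin

(* For a rank function on P(K^n) let A t be the largest nullity of an element of rank t.
   Submodularity against a line and monotonicity along a subspace of codimension one show
   that A starts at 0, ends at n - k, and increases by 0 or 1 in each step; the generalized
   weight d_i is the first rank at which A reaches i, so the weights are exactly the jump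
   points of A.  Orthogonal complementation is a rank-reversing involution of P(K^n)
   (Rk L^perp = n - Rk L), so the profile of the dual matroid is A* t = t + A (n - t) - A n,
   and A* jumps at t iff A does not jump at n + 1 - t. *)

section \<open>Coordinate spaces\<close>

lemma obtain_enumeration_with_prefix:
  assumes "finite B'" "B \<subseteq> B'"
  obtains b :: "nat \<Rightarrow> 'b" where "b ` {..<card B} = B" "b ` {..<card B'} = B'"
proof -
  have fin: "finite B" "finite (B' - B)"
    using assms finite_subset by auto
  obtain g where g: "bij_betw g {..<card B} B"
    using ex_bij_betw_nat_finite[OF fin(1)] atLeast0LessThan by metis
  obtain h where h: "bij_betw h {..<card (B' - B)} (B' - B)"
    using ex_bij_betw_nat_finite[OF fin(2)] atLeast0LessThan by metis
  define b where "b j = (if j < card B then g j else h (j - card B))" for j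
  have card: "card B' = card B + card (B' - B)"
    using card_Diff_subset[OF fin(1) assms(2)] card_mono[OF assms] by simp
  have "b ` {..<card B} = g ` {..<card B}"
    by (simp add: b_def)
  then have prefix: "b ` {..<card B} = B"
    using g by (simp add: bij_betw_def)
  have "{card B..<card B'} = (\<lambda>k. k + card B) ` {..<card (B' - B)}"
    using card by (simp add: atLeast0LessThan[symmetric] add.commute)
  then have "b ` {card B..<card B'} = (\<lambda>k. b (k + card B)) ` {..<card (B' - B)}"
    by (simp add: image_image)
  also have "\<dots> = h ` {..<card (B' - B)}"
    by (simp add: b_def)
  finally have "b ` {card B..<card B'} = h ` {..<card (B' - B)}" .
  then have suffix: "b ` {card B..<card B'} = B' - B"
    using h by (simp add: bij_betw_def)
  have "{..<card B'} = {..<card B} \<union> {card B..<card B'}"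
    using card by auto
  then have "b ` {..<card B'} = B'"
    using prefix suffix assms(2) by (auto simp: image_Un)
  with prefix show thesis
    by (rule that)
qed

text \<open>The fields \<open>mult\<close> and \<open>one\<close> of the module record are never used; they are filled
  with junk.\<close>

definition coord_module :: "(nat \<Rightarrow> 'a ring) \<Rightarrow> (nat \<Rightarrow> nat) \<Rightarrow> nat \<Rightarrow> ('a, nat \<Rightarrow> 'a) module" where
  "coord_module K ns i =
     \<lparr>carrier = vecs K ns i, mult = (\<lambda>_ _. zvec K i), one = zvec K i,
      zero = zvec K i, add = vadd K i, smult = vsmult K i\<rparr>"

lemma coord_module_simps [simp]:
  "carrier (coord_module K ns i) = vecs K ns i"
  "zero (coord_module K ns i) = zvec K i"
  "add (coord_module K ns i) = vadd K i"
  "smult (coord_module K ns i) = vsmult K i"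
  by (simp_all add: coord_module_def)

lemma coord_ops_apply [simp]:
  "zvec K i j = \<zero>\<^bsub>K i\<^esub>"
  "vadd K i v w j = v j \<oplus>\<^bsub>K i\<^esub> w j"
  "vsmult K i c v j = c \<otimes>\<^bsub>K i\<^esub> v j"
  by (simp_all add: zvec_def vadd_def vsmult_def)

lemma vecs_outside: "v \<in> vecs K ns i \<Longrightarrow> ns i \<le> j \<Longrightarrow> v j = \<zero>\<^bsub>K i\<^esub>"
  by (simp add: vecs_def)

locale factor_space =
  fixes K :: "nat \<Rightarrow> 'a ring" and ns :: "nat \<Rightarrow> nat" and i :: nat
  assumes field_factor: "field (K i)"
begin

interpretation F: field "K i" by (rule field_factor)

lemma vecs_component: "v \<in> vecs K ns i \<Longrightarrow> v j \<in> carrier (K i)"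
  by (cases "j < ns i") (auto simp: vecs_def)

lemma vecs_closed [simp]:
  "zvec K i \<in> vecs K ns i"
  "v \<in> vecs K ns i \<Longrightarrow> w \<in> vecs K ns i \<Longrightarrow> vadd K i v w \<in> vecs K ns i"
  "c \<in> carrier (K i) \<Longrightarrow> v \<in> vecs K ns i \<Longrightarrow> vsmult K i c v \<in> vecs K ns i"
  by (auto simp: vecs_def)

text \<open>Only now a simp rule: together with an unfolded \<open>vecs_def\<close> it makes the simplifier
  loop, which is why \<open>vecs_def\<close> is always used with \<open>simp del: vecs_component\<close> below.\<close>

declare vecs_component [simp]

lemma vadd_zvec [simp]: "v \<in> vecs K ns i \<Longrightarrow> vadd K i v (zvec K i) = v"
  by (simp add: fun_eq_iff)

lemma plus_zvec_eq:
  assumes "W \<subseteq> vecs K ns i"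
  shows "{vadd K i x y |x y. x \<in> W \<and> y \<in> {zvec K i}} = W"
proof -
  have "{vadd K i x y |x y. x \<in> W \<and> y \<in> {zvec K i}} = (\<lambda>x. vadd K i x (zvec K i)) ` W"
    by blast
  also have "\<dots> = (\<lambda>x. x) ` W"
    using assms by (intro image_cong) auto
  finally show ?thesis
    by simp
qed

lemma coord_module_vectorspace: "vectorspace (K i) (coord_module K ns i)"
proof (rule vs_criteria)
  let ?V = "coord_module K ns i"
  show "\<forall>v\<in>carrier ?V. \<exists>w\<in>carrier ?V. v \<oplus>\<^bsub>?V\<^esub> w = \<zero>\<^bsub>?V\<^esub>"
  proof
    fix v assume v: "v \<in> carrier ?V"
    have "vsmult K i (\<ominus>\<^bsub>K i\<^esub> \<one>\<^bsub>K i\<^esub>) v \<in> vecs K ns i"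
      using v by simp
    moreover have "vadd K i v (vsmult K i (\<ominus>\<^bsub>K i\<^esub> \<one>\<^bsub>K i\<^esub>) v) = zvec K i"
      using v by (simp add: fun_eq_iff F.l_minus F.r_neg)
    ultimately show "\<exists>w\<in>carrier ?V. v \<oplus>\<^bsub>?V\<^esub> w = \<zero>\<^bsub>?V\<^esub>"
      by auto
  qed
qed (simp_all add: field_factor fun_eq_iff F.a_ac F.m_assoc F.l_distr F.r_distr)

sublocale vs: vectorspace "K i" "coord_module K ns i"
  by (rule coord_module_vectorspace)

lemma is_subspace_iff_submodule:
  "is_subspace K ns i W \<longleftrightarrow> submodule (K i) W (coord_module K ns i)"
proof
  assume "is_subspace K ns i W"
  then show "submodule (K i) W (coord_module K ns i)"
    by (intro submodule.intro vs.module_axioms) (simp_all add: is_subspace_def)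
next
  assume "submodule (K i) W (coord_module K ns i)"
  then interpret W: submodule "K i" W "coord_module K ns i" .
  show "is_subspace K ns i W"
    using W.subset W.m_closed W.zero_closed W.smult_closed by (simp add: is_subspace_def)
qed

lemma is_subspace_subset: "is_subspace K ns i W \<Longrightarrow> W \<subseteq> vecs K ns i"
  by (simp add: is_subspace_def)

lemma is_subspace_span: "B \<subseteq> vecs K ns i \<Longrightarrow> is_subspace K ns i (vs.span B)"
  using vs.span_is_submodule by (simp add: is_subspace_iff_submodule)

lemma is_subspace_vecs: "is_subspace K ns i (vecs K ns i)"
  by (simp add: is_subspace_def)

lemma is_subspace_zero: "is_subspace K ns i {zvec K i}"
  using is_subspace_span[of "{}"] vs.span_empty by simp

lemma lincomb_apply:
  assumes "finite B" "B \<subseteq> vecs K ns i" "c \<in> B \<rightarrow> carrier (K i)"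
  shows "vs.lincomb c B j = (\<Oplus>\<^bsub>K i\<^esub>b\<in>B. c b \<otimes>\<^bsub>K i\<^esub> b j)"
  using assms
proof (induction B rule: finite_induct)
  case (insert x B)
  then have "vs.lincomb c (insert x B) = vadd K i (vsmult K i (c x) x) (vs.lincomb c B)"
    using vs.lincomb_insert2[of B c x] by auto
  moreover have "(\<lambda>b. c b \<otimes>\<^bsub>K i\<^esub> b j) \<in> B \<rightarrow> carrier (K i)"
    using insert.prems by (intro Pi_I F.m_closed) auto
  ultimately show ?case
    using insert by simp
qed simp

lemma vspan_eq_span:
  assumes "finite B" "B \<subseteq> vecs K ns i"
  shows "vspan K i B = vs.span B"
proof -
  have "v \<in> vspan K i B \<longleftrightarrow> (\<exists>c\<in>B \<rightarrow> carrier (K i). v = vs.lincomb c B)" for v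
    by (simp add: vspan_def fun_eq_iff lincomb_apply[OF assms] cong: bex_cong)
  then have "vspan K i B = {vs.lincomb c B |c. c \<in> B \<rightarrow> carrier (K i)}"
    by blast
  then show ?thesis
    using vs.finite_span assms by simp
qed

definition unit_vec :: "nat \<Rightarrow> nat \<Rightarrow> 'a" where
  "unit_vec k = (\<lambda>j. if j = k then \<one>\<^bsub>K i\<^esub> else \<zero>\<^bsub>K i\<^esub>)"

lemma unit_vec_in_vecs: "k < ns i \<Longrightarrow> unit_vec k \<in> vecs K ns i"
  by (auto simp: unit_vec_def vecs_def simp del: vecs_component)

lemma inj_unit_vec: "inj unit_vec"
proof (rule injI)
  fix k k' assume "unit_vec k = unit_vec k'"
  then have "unit_vec k k = unit_vec k' k" by simp
  then show "k = k'" by (auto simp: unit_vec_def split: if_splits)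
qed

lemma lincomb_unit_vecs:
  assumes d: "d \<le> ns i" and c: "c \<in> unit_vec ` {..<d} \<rightarrow> carrier (K i)"
  shows "vs.lincomb c (unit_vec ` {..<d}) = (\<lambda>j. if j < d then c (unit_vec j) else \<zero>\<^bsub>K i\<^esub>)"
proof
  fix j
  have c': "c (unit_vec k) \<in> carrier (K i)" if "k < d" for k
    using c that by auto
  have sub: "unit_vec ` {..<d} \<subseteq> vecs K ns i"
    using d unit_vec_in_vecs by auto
  have "vs.lincomb c (unit_vec ` {..<d}) j = (\<Oplus>\<^bsub>K i\<^esub>b\<in>unit_vec ` {..<d}. c b \<otimes>\<^bsub>K i\<^esub> b j)"
    by (rule lincomb_apply[OF _ sub c]) simp
  also have "\<dots> = (\<Oplus>\<^bsub>K i\<^esub>k\<in>{..<d}. c (unit_vec k) \<otimes>\<^bsub>K i\<^esub> unit_vec k j)"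
    using c' sub by (intro F.finsum_reindex inj_on_subset[OF inj_unit_vec]) auto
  also have "\<dots> = (\<Oplus>\<^bsub>K i\<^esub>k\<in>{..<d}. if j = k then c (unit_vec k) else \<zero>\<^bsub>K i\<^esub>)"
    using c' by (intro F.finsum_cong') (auto simp: unit_vec_def)
  also have "\<dots> = (if j < d then c (unit_vec j) else \<zero>\<^bsub>K i\<^esub>)"
  proof (cases "j < d")
    case False
    then have "(\<Oplus>\<^bsub>K i\<^esub>k\<in>{..<d}. if j = k then c (unit_vec k) else \<zero>\<^bsub>K i\<^esub>)
        = (\<Oplus>\<^bsub>K i\<^esub>k\<in>{..<d}. \<zero>\<^bsub>K i\<^esub>)"
      by (intro F.finsum_cong') auto
    then show ?thesis
      using False by simp
  qed (use c' in \<open>auto intro: F.add.finprod_singleton\<close>)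
  finally show "vs.lincomb c (unit_vec ` {..<d}) j = (if j < d then c (unit_vec j) else \<zero>\<^bsub>K i\<^esub>)" .
qed

lemma lin_indpt_unit_vecs:
  assumes "d \<le> ns i" shows "vs.lin_indpt (unit_vec ` {..<d})"
proof (rule vs.finite_lin_indpt2)
  show "unit_vec ` {..<d} \<subseteq> carrier (coord_module K ns i)"
    using assms unit_vec_in_vecs by auto
  fix c assume c: "c \<in> unit_vec ` {..<d} \<rightarrow> carrier (K i)"
    and "vs.lincomb c (unit_vec ` {..<d}) = \<zero>\<^bsub>coord_module K ns i\<^esub>"
  then have "\<forall>j. (if j < d then c (unit_vec j) else \<zero>\<^bsub>K i\<^esub>) = \<zero>\<^bsub>K i\<^esub>"
    using lincomb_unit_vecs[OF assms c] by (simp add: fun_eq_iff)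
  then show "\<forall>v\<in>unit_vec ` {..<d}. c v = \<zero>\<^bsub>K i\<^esub>"
    by (metis imageE lessThan_iff)
qed simp

lemma span_unit_vecs:
  assumes d: "d \<le> ns i"
  shows "vs.span (unit_vec ` {..<d}) = {v \<in> vecs K ns i. \<forall>j\<ge>d. v j = \<zero>\<^bsub>K i\<^esub>}"
proof -
  have sub: "unit_vec ` {..<d} \<subseteq> carrier (coord_module K ns i)"
    using d unit_vec_in_vecs by auto
  have "v \<in> vs.span (unit_vec ` {..<d})" if v: "v \<in> vecs K ns i" "\<forall>j\<ge>d. v j = \<zero>\<^bsub>K i\<^esub>" for v
  proof -
    define c where "c u = v (the_inv unit_vec u)" for u
    have c: "c \<in> unit_vec ` {..<d} \<rightarrow> carrier (K i)"
      using v by (auto simp: c_def the_inv_f_f[OF inj_unit_vec])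
    have "vs.lincomb c (unit_vec ` {..<d}) = v"
      using v by (auto simp: lincomb_unit_vecs[OF d c] c_def the_inv_f_f[OF inj_unit_vec] fun_eq_iff)
    then show ?thesis
      using c vs.finite_span[OF _ sub] by auto
  qed
  moreover have "v \<in> vecs K ns i \<and> (\<forall>j\<ge>d. v j = \<zero>\<^bsub>K i\<^esub>)"
    if "v \<in> vs.span (unit_vec ` {..<d})" for v
    using that vs.finite_span[OF _ sub] vs.lincomb_closed[OF sub] lincomb_unit_vecs[OF d]
    by auto
  ultimately show ?thesis by blast
qed

lemma span_unit_vecs_vecs: "vs.span (unit_vec ` {..<ns i}) = vecs K ns i"
  using span_unit_vecs[of "ns i"] by (auto simp: vecs_def simp del: vecs_component)

lemma basis_unit_vecs: "vs.basis (unit_vec ` {..<ns i})"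
  using lin_indpt_unit_vecs[of "ns i"] span_unit_vecs_vecs unit_vec_in_vecs
  by (auto simp: vs.basis_def)

lemma fin_dim_coord_module: "vs.fin_dim"
  using basis_unit_vecs by (auto simp: vs.basis_def vs.fin_dim_def)

lemma dim_coord_module: "vs.dim = ns i"
  using vs.dim_basis[OF _ basis_unit_vecs] card_image[OF inj_on_subset[OF inj_unit_vec]] by simp

lemma lin_indpt_card_le:
  assumes "B \<subseteq> vecs K ns i" "vs.lin_indpt B"
  shows "finite B" "card B \<le> ns i"
  using vs.li_le_dim[OF fin_dim_coord_module] assms dim_coord_module by simp_all

lemma card_le_if_subset_span:
  assumes "B \<subseteq> vecs K ns i" "vs.lin_indpt B" "finite C" "C \<subseteq> vecs K ns i" "B \<subseteq> vs.span C"
  shows "card B \<le> card C"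
proof -
  obtain D :: "(nat \<Rightarrow> 'a) set" where "int (card D) \<le> int (card C) - int (card B)"
    using vs.replacement[OF lin_indpt_card_le(1)] assms by (metis coord_module_simps(1))
  then show ?thesis by simp
qed

lemma lin_indpt_insert:
  assumes "B \<subseteq> vecs K ns i" "vs.lin_indpt B" "v \<in> vecs K ns i" "v \<notin> vs.span B"
  shows "vs.lin_indpt (insert v B)"
proof -
  have "v \<notin> B"
    using assms(1,4) vs.in_own_span by auto
  then show ?thesis
    using vs.lin_dep_iff_in_span[of B v] assms by simp
qed

lemma span_subset_subspace:
  "is_subspace K ns i W \<Longrightarrow> B \<subseteq> W \<Longrightarrow> vs.span B \<subseteq> W"
  by (rule vs.span_is_subset) (simp_all add: is_subspace_iff_submodule)

lemma subspace_basis_extend: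
  assumes W: "is_subspace K ns i W" and B0: "B0 \<subseteq> W" "vs.lin_indpt B0"
  obtains B where "B0 \<subseteq> B" "B \<subseteq> W" "finite B" "vs.lin_indpt B" "vs.span B = W"
proof -
  let ?P = "\<lambda>S. B0 \<subseteq> S \<and> S \<subseteq> W \<and> vs.lin_indpt S"
  have Wc: "W \<subseteq> vecs K ns i"
    using W by (rule is_subspace_subset)
  have "finite A \<and> card A \<le> ns i" if "?P A" for A
  proof -
    have "A \<subseteq> vecs K ns i" "vs.lin_indpt A"
      using that Wc by auto
    then show ?thesis
      using lin_indpt_card_le by blast
  qed
  then obtain A where A: "finite A" "maximal A ?P"
    using maximal_exists[of ?P "ns i" B0] B0 by blast
  then have PA: "?P A"
    by (simp add: maximal_def)
  have "W \<subseteq> vs.span A"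
  proof
    fix w assume w: "w \<in> W"
    show "w \<in> vs.span A"
    proof (rule ccontr)
      assume w_notin: "w \<notin> vs.span A"
      have "vs.lin_indpt (insert w A)"
        using PA w Wc w_notin by (intro lin_indpt_insert) auto
      then have "?P (insert w A)"
        using PA w by blast
      then have "insert w A = A"
        using A(2) unfolding maximal_def by blast
      then have "w \<in> A"
        by blast
      moreover have "A \<subseteq> vs.span A"
        using PA Wc vs.in_own_span[of A] by auto
      ultimately show False
        using w_notin by blast
    qed
  qed
  moreover have "vs.span A \<subseteq> W"
    using span_subset_subspace[OF W] PA by blast
  ultimately show thesis
    using that PA A(1) by blast
qed

lemma vdim_span:
  assumes B: "B \<subseteq> vecs K ns i" "finite B" "vs.lin_indpt B"
  shows "vdim K i (vs.span B) = card B"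
  unfolding vdim_def
proof (rule Least_equality)
  show "\<exists>C. finite C \<and> C \<subseteq> vs.span B \<and> card C = card B \<and> vspan K i C = vs.span B"
    using B vs.in_own_span[of B] vspan_eq_span[of B] by auto
next
  fix d assume "\<exists>C. finite C \<and> C \<subseteq> vs.span B \<and> card C = d \<and> vspan K i C = vs.span B"
  then obtain C where C: "finite C" "C \<subseteq> vs.span B" "card C = d" "vspan K i C = vs.span B"
    by blast
  have "C \<subseteq> vecs K ns i"
    using C(2) vs.span_is_subset2[of B] B(1) by auto
  moreover then have "B \<subseteq> vs.span C"
    using C vspan_eq_span vs.in_own_span[of B] B(1) by auto
  ultimately show "card B \<le> d"
    using card_le_if_subset_span[of B C] B C(1,3) by blast
qed

lemma subspace_basis:
  assumes "is_subspace K ns i W"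
  obtains B where "B \<subseteq> W" "finite B" "vs.lin_indpt B" "vs.span B = W" "vdim K i W = card B"
proof -
  have "vs.lin_indpt {}"
    by (rule vs.finite_lin_indpt2) simp_all
  then obtain B where B: "B \<subseteq> W" "finite B" "vs.lin_indpt B" "vs.span B = W"
    using subspace_basis_extend[OF assms, of "{}"] by blast
  moreover have "vdim K i W = card B"
    using vdim_span[of B] B is_subspace_subset[OF assms] by auto
  ultimately show thesis
    using that by blast
qed

lemma vdim_le: "is_subspace K ns i W \<Longrightarrow> vdim K i W \<le> ns i"
  by (metis subspace_basis is_subspace_subset lin_indpt_card_le(2) order_trans)

lemma vdim_vecs: "vdim K i (vecs K ns i) = ns i"
  using vdim_span[of "unit_vec ` {..<ns i}"] basis_unit_vecs span_unit_vecs_vecs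
    card_image[OF inj_on_subset[OF inj_unit_vec]]
  by (simp add: vs.basis_def)

lemma vdim_zero: "vdim K i {zvec K i} = 0"
proof -
  have "vs.lin_indpt {}"
    by (rule vs.finite_lin_indpt2) simp_all
  then show ?thesis
    using vdim_span[of "{}"] vs.span_empty by simp
qed

lemma subspace_eq_if_vdim_le:
  assumes W: "is_subspace K ns i W" and W': "is_subspace K ns i W'"
    and sub: "W \<subseteq> W'" and le: "vdim K i W' \<le> vdim K i W"
  shows "W = W'"
proof (rule ccontr)
  assume "W \<noteq> W'"
  then obtain w where w: "w \<in> W'" "w \<notin> W"
    using sub by blast
  obtain B where B: "B \<subseteq> W" "finite B" "vs.lin_indpt B" "vs.span B = W" "vdim K i W = card B"
    using subspace_basis[OF W] by blast
  obtain B' where B': "B' \<subseteq> W'" "finite B'" "vs.lin_indpt B'" "vs.span B' = W'" "vdim K i W' = card B'"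
    using subspace_basis[OF W'] by blast
  have vecs: "B \<subseteq> vecs K ns i" "B' \<subseteq> vecs K ns i" "w \<in> vecs K ns i"
    using B(1) B'(1) w(1) is_subspace_subset[OF W] is_subspace_subset[OF W'] by auto
  have "vs.lin_indpt (insert w B)"
    using lin_indpt_insert[of B w] vecs B(3,4) w(2) by simp
  moreover have "insert w B \<subseteq> vs.span B'"
    using B'(4) w(1) B(1) sub by blast
  ultimately have "card (insert w B) \<le> card B'"
    using card_le_if_subset_span[of "insert w B" B'] vecs B'(2) by blast
  moreover have "w \<notin> B"
    using w(2) B(1) by blast
  ultimately show False
    using le B(2,5) B'(5) by simp
qed

definition dot :: "(nat \<Rightarrow> 'a) \<Rightarrow> (nat \<Rightarrow> 'a) \<Rightarrow> 'a" where
  "dot v w = (\<Oplus>\<^bsub>K i\<^esub>j\<in>{..<ns i}. v j \<otimes>\<^bsub>K i\<^esub> w j)"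

lemma vperp_eq: "vperp K ns i W = {v \<in> vecs K ns i. \<forall>w\<in>W. dot v w = \<zero>\<^bsub>K i\<^esub>}"
  by (simp add: vperp_def dot_def)

lemma dot_closed: "v \<in> vecs K ns i \<Longrightarrow> w \<in> vecs K ns i \<Longrightarrow> dot v w \<in> carrier (K i)"
  unfolding dot_def by (intro F.finsum_closed Pi_I F.m_closed) simp_all

lemma dot_comm: "v \<in> vecs K ns i \<Longrightarrow> w \<in> vecs K ns i \<Longrightarrow> dot v w = dot w v"
  unfolding dot_def by (intro F.finsum_cong') (simp_all add: F.m_comm)

lemma dot_vadd:
  assumes "u \<in> vecs K ns i" "v \<in> vecs K ns i" "w \<in> vecs K ns i"
  shows "dot (vadd K i u v) w = dot u w \<oplus>\<^bsub>K i\<^esub> dot v w"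
proof -
  have "dot (vadd K i u v) w = (\<Oplus>\<^bsub>K i\<^esub>j\<in>{..<ns i}. u j \<otimes>\<^bsub>K i\<^esub> w j \<oplus>\<^bsub>K i\<^esub> v j \<otimes>\<^bsub>K i\<^esub> w j)"
    unfolding dot_def using assms by (intro F.finsum_cong') (simp_all add: F.l_distr)
  also have "\<dots> = dot u w \<oplus>\<^bsub>K i\<^esub> dot v w"
    unfolding dot_def using assms by (intro F.finsum_addf) auto
  finally show ?thesis .
qed

lemma dot_vsmult:
  assumes "c \<in> carrier (K i)" "v \<in> vecs K ns i" "w \<in> vecs K ns i"
  shows "dot (vsmult K i c v) w = c \<otimes>\<^bsub>K i\<^esub> dot v w"
proof -
  have "dot (vsmult K i c v) w = (\<Oplus>\<^bsub>K i\<^esub>j\<in>{..<ns i}. c \<otimes>\<^bsub>K i\<^esub> (v j \<otimes>\<^bsub>K i\<^esub> w j))"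
    unfolding dot_def using assms by (intro F.finsum_cong') (simp_all add: F.m_assoc)
  also have "\<dots> = c \<otimes>\<^bsub>K i\<^esub> dot v w"
    unfolding dot_def using assms by (intro F.finsum_rdistr[symmetric]) auto
  finally show ?thesis .
qed

lemma dot_zvec: "w \<in> vecs K ns i \<Longrightarrow> dot (zvec K i) w = \<zero>\<^bsub>K i\<^esub>"
  unfolding dot_def by (simp cong: F.finsum_cong')

lemma dot_unit_vec:
  assumes "v \<in> vecs K ns i" "k < ns i"
  shows "dot v (unit_vec k) = v k"
proof -
  have "dot v (unit_vec k) = (\<Oplus>\<^bsub>K i\<^esub>j\<in>{..<ns i}. if k = j then v j else \<zero>\<^bsub>K i\<^esub>)"
    unfolding dot_def using assms by (intro F.finsum_cong') (auto simp: unit_vec_def)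
  also have "\<dots> = v k"
    using assms by (intro F.add.finprod_singleton) auto
  finally show ?thesis .
qed

lemma is_subspace_vperp: "W \<subseteq> vecs K ns i \<Longrightarrow> is_subspace K ns i (vperp K ns i W)"
  unfolding is_subspace_def vperp_eq
  by (auto simp: dot_zvec dot_vadd dot_vsmult subsetD)

lemma vperp_span:
  assumes B: "B \<subseteq> vecs K ns i"
  shows "vperp K ns i (vs.span B) = vperp K ns i B"
proof
  show "vperp K ns i (vs.span B) \<subseteq> vperp K ns i B"
    using vs.in_own_span[of B] B by (auto simp: vperp_eq)
  show "vperp K ns i B \<subseteq> vperp K ns i (vs.span B)"
  proof
    fix v assume v: "v \<in> vperp K ns i B"
    then have v_vec: "v \<in> vecs K ns i"
      by (simp add: vperp_eq)
    have "B \<subseteq> vperp K ns i {v}"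
      using v B dot_comm[OF v_vec] by (auto simp: vperp_eq subsetD)
    then have "vs.span B \<subseteq> vperp K ns i {v}"
      using v_vec by (intro span_subset_subspace is_subspace_vperp) auto
    then show "v \<in> vperp K ns i (vs.span B)"
      using v_vec dot_comm by (auto simp: vperp_eq)
  qed
qed

lemma vperp_vecs: "vperp K ns i (vecs K ns i) = {zvec K i}"
proof
  show "vperp K ns i (vecs K ns i) \<subseteq> {zvec K i}"
  proof
    fix v assume v: "v \<in> vperp K ns i (vecs K ns i)"
    then have v_vec: "v \<in> vecs K ns i"
      by (simp add: vperp_eq)
    have "v k = \<zero>\<^bsub>K i\<^esub>" for k
    proof (cases "k < ns i")
      case True
      then show ?thesis
        using v dot_unit_vec[OF v_vec True] unit_vec_in_vecs by (auto simp: vperp_eq)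
    next
      case False
      then show ?thesis
        by (intro vecs_outside[OF v_vec]) simp
    qed
    then show "v \<in> {zvec K i}"
      by (auto simp: fun_eq_iff)
  qed
  show "{zvec K i} \<subseteq> vperp K ns i (vecs K ns i)"
    by (simp add: vperp_eq dot_zvec)
qed

lemma subset_vperp_vperp: "W \<subseteq> vecs K ns i \<Longrightarrow> W \<subseteq> vperp K ns i (vperp K ns i W)"
  using dot_comm by (auto simp: vperp_eq subsetD)

lemma vdim_supported:
  assumes "d \<le> ns i"
  shows "vdim K i {v \<in> vecs K ns i. \<forall>j\<ge>d. v j = \<zero>\<^bsub>K i\<^esub>} = d"
proof -
  have "unit_vec ` {..<d} \<subseteq> vecs K ns i"
    using assms unit_vec_in_vecs by auto
  then show ?thesis
    using vdim_span[of "unit_vec ` {..<d}"] span_unit_vecs[OF assms] lin_indpt_unit_vecs[OF assms]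
      card_image[OF inj_on_subset[OF inj_unit_vec]]
    by simp
qed

lemma dim_subspace:
  assumes U: "is_subspace K ns i U"
  shows "vectorspace.dim (K i) (coord_module K ns i\<lparr>carrier := U\<rparr>) = vdim K i U"
proof -
  obtain B where B: "B \<subseteq> U" "finite B" "vs.lin_indpt B" "vs.span B = U" "vdim K i U = card B"
    using subspace_basis[OF U] by blast
  have sub: "submodule (K i) U (coord_module K ns i)"
    using U by (simp add: is_subspace_iff_submodule)
  then have "subspace (K i) U (coord_module K ns i)"
    by (simp add: subspace_def vs.vectorspace_axioms)
  then interpret U: vectorspace "K i" "coord_module K ns i\<lparr>carrier := U\<rparr>"
    by (rule vs.subspace_is_vs)
  have "U.basis B"
    using vs.span_li_not_depend[OF B(1) sub] B by (simp add: U.basis_def)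
  then show ?thesis
    using U.dim_basis[OF B(2)] B(5) by simp
qed

lemma rank_nullity_vdim:
  assumes "linear_map (K i) (coord_module K ns i) (coord_module K ns i) T"
  shows "vdim K i (T ` vecs K ns i) + vdim K i {v \<in> vecs K ns i. T v = zvec K i} = ns i"
proof -
  interpret T: linear_map "K i" "coord_module K ns i" "coord_module K ns i" T
    by (rule assms)
  have "is_subspace K ns i T.imT" "is_subspace K ns i T.kerT"
    using T.imT_is_subspace T.kerT_is_subspace
    by (simp_all add: is_subspace_iff_submodule subspace_def)
  then show ?thesis
    using T.rank_nullity[OF fin_dim_coord_module] dim_coord_module
    by (simp add: dim_subspace T.im_def T.ker_def)
qed

definition pairing :: "(nat \<Rightarrow> nat \<Rightarrow> 'a) \<Rightarrow> nat \<Rightarrow> (nat \<Rightarrow> 'a) \<Rightarrow> nat \<Rightarrow> 'a" where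
  "pairing b d v = (\<lambda>j. if j < d then dot v (b j) else \<zero>\<^bsub>K i\<^esub>)"

lemma pairing_in_vecs:
  assumes "d \<le> ns i" "\<And>j. j < d \<Longrightarrow> b j \<in> vecs K ns i" "v \<in> vecs K ns i"
  shows "pairing b d v \<in> vecs K ns i"
  using assms dot_closed by (auto simp: pairing_def vecs_def simp del: vecs_component)

lemma pairing_linear:
  assumes d: "d \<le> ns i" and b: "\<And>j. j < d \<Longrightarrow> b j \<in> vecs K ns i"
  shows "linear_map (K i) (coord_module K ns i) (coord_module K ns i) (pairing b d)"
proof -
  have "pairing b d \<in> module_hom (K i) (coord_module K ns i) (coord_module K ns i)"
    using pairing_in_vecs[OF d b] b
    by (auto simp: module_hom_def pairing_def fun_eq_iff dot_vadd dot_vsmult)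
  then show ?thesis
    by (simp add: linear_map_def mod_hom_def mod_hom_axioms_def vs.vectorspace_axioms vs.module_axioms)
qed

lemma ker_pairing:
  "{v \<in> vecs K ns i. pairing b d v = zvec K i} = vperp K ns i (b ` {..<d})"
  by (auto simp: pairing_def vperp_eq fun_eq_iff)

lemma pairing_surj:
  assumes b: "\<And>j. j < ns i \<Longrightarrow> b j \<in> vecs K ns i"
    and span: "vs.span (b ` {..<ns i}) = vecs K ns i"
  shows "pairing b (ns i) ` vecs K ns i = vecs K ns i"
proof -
  let ?T = "pairing b (ns i)"
  have lin: "linear_map (K i) (coord_module K ns i) (coord_module K ns i) ?T"
    using b by (intro pairing_linear) auto
  have "b ` {..<ns i} \<subseteq> vecs K ns i"
    using b by auto
  then have "{v \<in> vecs K ns i. ?T v = zvec K i} = {zvec K i}"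
    using vperp_span[of "b ` {..<ns i}"] by (simp add: ker_pairing span vperp_vecs)
  then have "vdim K i (?T ` vecs K ns i) = ns i"
    using rank_nullity_vdim[OF lin] vdim_zero by simp
  moreover have "is_subspace K ns i (?T ` vecs K ns i)"
    using linear_map.imT_is_subspace[OF lin] mod_hom.im_def[OF linear_map.axioms(3)[OF lin]]
    by (simp add: is_subspace_iff_submodule subspace_def)
  ultimately show ?thesis
    using subspace_eq_if_vdim_le[OF _ is_subspace_vecs, of "?T ` vecs K ns i"]
      is_subspace_subset vdim_vecs
    by simp
qed

lemma pairing_prefix_onto:
  assumes d: "d \<le> ns i" and b: "\<And>j. j < ns i \<Longrightarrow> b j \<in> vecs K ns i"
    and span: "vs.span (b ` {..<ns i}) = vecs K ns i"
  shows "pairing b d ` vecs K ns i = {v \<in> vecs K ns i. \<forall>j\<ge>d. v j = \<zero>\<^bsub>K i\<^esub>}"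
proof
  show "pairing b d ` vecs K ns i \<subseteq> {v \<in> vecs K ns i. \<forall>j\<ge>d. v j = \<zero>\<^bsub>K i\<^esub>}"
    using pairing_in_vecs[OF d] b d by (auto simp: pairing_def)
  show "{v \<in> vecs K ns i. \<forall>j\<ge>d. v j = \<zero>\<^bsub>K i\<^esub>} \<subseteq> pairing b d ` vecs K ns i"
  proof
    fix u assume u: "u \<in> {v \<in> vecs K ns i. \<forall>j\<ge>d. v j = \<zero>\<^bsub>K i\<^esub>}"
    then have "u \<in> pairing b (ns i) ` vecs K ns i"
      using pairing_surj[of b] b span by simp
    then obtain v where v: "v \<in> vecs K ns i" "u = pairing b (ns i) v"
      by blast
    have "pairing b d v j = u j" for j
      using u v d by (cases "j < d") (auto simp: pairing_def)
    then have "pairing b d v = u"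
      by (simp add: fun_eq_iff)
    then show "u \<in> pairing b d ` vecs K ns i"
      using v(1) by blast
  qed
qed

text \<open>Over a finite field \<open>W \<inter> W\<^sup>\<perp>\<close> may be nonzero, so the dimension formula does
  not come from a direct sum.  Instead: pairing with a basis of the whole space is injective,
  hence onto; if that basis starts with a basis of \<open>W\<close>, truncating to the first
  \<open>dim W\<close> coordinates shows that pairing with the basis of \<open>W\<close> maps onto
  \<open>K\<^sup>d\<close>, and its kernel is \<open>W\<^sup>\<perp>\<close>.\<close>

lemma vdim_vperp:
  assumes W: "is_subspace K ns i W"
  shows "vdim K i (vperp K ns i W) + vdim K i W = ns i"
proof -
  obtain B where B: "B \<subseteq> W" "finite B" "vs.lin_indpt B" "vs.span B = W" "vdim K i W = card B"
    using subspace_basis[OF W] by blast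
  have B_vecs: "B \<subseteq> vecs K ns i"
    using B(1) is_subspace_subset[OF W] by blast
  obtain B' where B': "B \<subseteq> B'" "B' \<subseteq> vecs K ns i" "finite B'" "vs.lin_indpt B'"
      "vs.span B' = vecs K ns i"
    using subspace_basis_extend[OF is_subspace_vecs B_vecs B(3)] by blast
  have card_B': "card B' = ns i"
    using vdim_span[OF B'(2,3,4)] B'(5) vdim_vecs by simp
  define d where "d = card B"
  have d: "d \<le> ns i"
    using card_mono[OF B'(3,1)] card_B' by (simp add: d_def)
  obtain b where b: "b ` {..<d} = B" "b ` {..<ns i} = B'"
    using obtain_enumeration_with_prefix[OF B'(3,1)] unfolding card_B' d_def .
  have b_vecs: "b j \<in> vecs K ns i" if "j < ns i" for j
    using b(2) B'(2) that by blast
  have "linear_map (K i) (coord_module K ns i) (coord_module K ns i) (pairing b d)"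
    using b_vecs d by (intro pairing_linear) auto
  moreover have "pairing b d ` vecs K ns i = {v \<in> vecs K ns i. \<forall>j\<ge>d. v j = \<zero>\<^bsub>K i\<^esub>}"
    using b_vecs b(2) B'(5) by (intro pairing_prefix_onto[OF d]) auto
  moreover have "{v \<in> vecs K ns i. pairing b d v = zvec K i} = vperp K ns i W"
    using ker_pairing b(1) vperp_span[OF B_vecs] B(4) by simp
  ultimately show ?thesis
    using rank_nullity_vdim vdim_supported[OF d] B(5) d_def by force
qed

lemma vperp_vperp:
  assumes W: "is_subspace K ns i W"
  shows "vperp K ns i (vperp K ns i W) = W"
proof -
  have W_vecs: "W \<subseteq> vecs K ns i"
    using W by (rule is_subspace_subset)
  have P: "is_subspace K ns i (vperp K ns i W)"
    using W_vecs by (rule is_subspace_vperp)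
  then have PP: "is_subspace K ns i (vperp K ns i (vperp K ns i W))"
    using is_subspace_subset is_subspace_vperp by blast
  have "vdim K i (vperp K ns i (vperp K ns i W)) = vdim K i W"
    using vdim_vperp[OF W] vdim_vperp[OF P] by simp
  then show ?thesis
    using subspace_eq_if_vdim_le[OF W PP subset_vperp_vperp[OF W_vecs]] by simp
qed

lemma exists_subspace_codim1:
  assumes W: "is_subspace K ns i W" and pos: "0 < vdim K i W"
  obtains W' where "is_subspace K ns i W'" "W' \<subseteq> W" "vdim K i W' + 1 = vdim K i W"
proof -
  obtain B where B: "B \<subseteq> W" "finite B" "vs.lin_indpt B" "vs.span B = W" "vdim K i W = card B"
    using subspace_basis[OF W] by blast
  obtain b where b: "b \<in> B"
    using pos B(5) by (metis card.empty ex_in_conv less_irrefl)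
  have B_vecs: "B - {b} \<subseteq> vecs K ns i"
    using B(1) is_subspace_subset[OF W] by blast
  have "vs.lin_indpt (B - {b})"
    using vs.subset_li_is_li[OF B(3)] by blast
  then have "vdim K i (vs.span (B - {b})) + 1 = vdim K i W"
    using vdim_span[OF B_vecs] B(2,5) b card_gt_0_iff[of B] by auto
  moreover have "vs.span (B - {b}) \<subseteq> W"
    using B(4) vs.span_is_monotone[of "B - {b}" B] by blast
  ultimately show thesis
    using that is_subspace_span[OF B_vecs] by blast
qed

lemma span_singleton:
  assumes v: "v \<in> vecs K ns i"
  shows "vs.span {v} = {vsmult K i c v |c. c \<in> carrier (K i)}"
proof -
  have lincomb: "vs.lincomb a {v} = vsmult K i (a v) v" if a: "a \<in> {v} \<rightarrow> carrier (K i)" for a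
  proof
    fix j
    show "vs.lincomb a {v} j = vsmult K i (a v) v j"
      using lincomb_apply[of "{v}" a j] a v by simp
  qed
  have "vs.span {v} = {vs.lincomb a {v} |a. a \<in> {v} \<rightarrow> carrier (K i)}"
    using vs.finite_span[of "{v}"] v by simp
  also have "\<dots> = {vsmult K i c v |c. c \<in> carrier (K i)}"
  proof (intro equalityI subsetI)
    fix x assume "x \<in> {vs.lincomb a {v} |a. a \<in> {v} \<rightarrow> carrier (K i)}"
    then obtain a where "a \<in> {v} \<rightarrow> carrier (K i)" "x = vs.lincomb a {v}"
      by blast
    then show "x \<in> {vsmult K i c v |c. c \<in> carrier (K i)}"
      using lincomb by auto
  next
    fix x assume "x \<in> {vsmult K i c v |c. c \<in> carrier (K i)}"
    then obtain c where c: "c \<in> carrier (K i)" "x = vsmult K i c v"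
      by blast
    then have "(\<lambda>_. c) \<in> {v} \<rightarrow> carrier (K i)" "x = vs.lincomb (\<lambda>_. c) {v}"
      using lincomb[of "\<lambda>_. c"] by auto
    then show "x \<in> {vs.lincomb a {v} |a. a \<in> {v} \<rightarrow> carrier (K i)}"
      by blast
  qed
  finally show ?thesis .
qed

lemma vdim_line:
  assumes "v \<in> vecs K ns i" "v \<noteq> zvec K i"
  shows "vdim K i (vs.span {v}) = 1"
proof -
  have "vs.lin_indpt {}"
    by (rule vs.finite_lin_indpt2) simp_all
  then have "vs.lin_indpt {v}"
    using lin_indpt_insert[of "{}" v] vs.span_empty assms by simp
  then show ?thesis
    using vdim_span[of "{v}"] assms(1) by simp
qed

lemma subspace_inter_line:
  assumes W: "is_subspace K ns i W" and v: "v \<in> vecs K ns i" "v \<notin> W"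
  shows "W \<inter> vs.span {v} = {zvec K i}"
proof
  show "W \<inter> vs.span {v} \<subseteq> {zvec K i}"
  proof
    fix y assume y: "y \<in> W \<inter> vs.span {v}"
    then obtain c where c: "c \<in> carrier (K i)" "y = vsmult K i c v"
      using span_singleton[OF v(1)] by blast
    show "y \<in> {zvec K i}"
    proof (cases "c = \<zero>\<^bsub>K i\<^esub>")
      case True
      then show ?thesis
        using c v(1) by (simp add: fun_eq_iff)
    next
      case False
      then have "inv\<^bsub>K i\<^esub> c \<in> carrier (K i)" "v = vsmult K i (inv\<^bsub>K i\<^esub> c) y"
        using c v(1) F.field_Units by (auto simp: fun_eq_iff F.m_assoc[symmetric])
      then have "v \<in> W"
        using y W by (simp add: is_subspace_def)
      with v(2) show ?thesis ..
    qed
  qed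
  show "{zvec K i} \<subseteq> W \<inter> vs.span {v}"
    using W is_subspace_span[of "{v}"] v(1) by (simp add: is_subspace_def)
qed

lemma span_plus_line:
  assumes B: "B \<subseteq> vecs K ns i" "finite B" and v: "v \<in> vecs K ns i" "v \<notin> B"
  shows "{vadd K i x y |x y. x \<in> vs.span B \<and> y \<in> vs.span {v}} = vs.span (insert v B)"
proof
  let ?C = "insert v B"
  have C_vecs: "?C \<subseteq> vecs K ns i"
    using B v by simp
  have "vs.span B \<subseteq> vs.span ?C" "vs.span {v} \<subseteq> vs.span ?C"
    using vs.span_is_monotone[of B ?C] vs.span_is_monotone[of "{v}" ?C] by blast+
  then show "{vadd K i x y |x y. x \<in> vs.span B \<and> y \<in> vs.span {v}} \<subseteq> vs.span ?C"
    using is_subspace_span[OF C_vecs] unfolding is_subspace_def by blast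
  show "vs.span ?C \<subseteq> {vadd K i x y |x y. x \<in> vs.span B \<and> y \<in> vs.span {v}}"
  proof
    fix z assume "z \<in> vs.span ?C"
    then obtain a where a: "a \<in> ?C \<rightarrow> carrier (K i)" "vs.lincomb a ?C = z"
      using vs.finite_in_span[of ?C z] C_vecs B(2) by auto
    have aB: "a \<in> B \<rightarrow> carrier (K i)" and av: "a v \<in> carrier (K i)"
      using a(1) by auto
    have "z = vadd K i (vsmult K i (a v) v) (vs.lincomb a B)"
      using vs.lincomb_insert2[of B a v] a B v by simp
    also have "\<dots> = vadd K i (vs.lincomb a B) (vsmult K i (a v) v)"
      using vs.M.a_comm[of "vsmult K i (a v) v" "vs.lincomb a B"]
        vs.lincomb_closed[of B a] aB av B v(1) by simp
    finally have "z = vadd K i (vs.lincomb a B) (vsmult K i (a v) v)" .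
    moreover have "vs.lincomb a B \<in> vs.span B"
      using vs.finite_span[of B] B aB by auto
    moreover have "vsmult K i (a v) v \<in> vs.span {v}"
      using span_singleton[OF v(1)] av by auto
    ultimately show "z \<in> {vadd K i x y |x y. x \<in> vs.span B \<and> y \<in> vs.span {v}}"
      by blast
  qed
qed

lemma subspace_plus_line:
  assumes W: "is_subspace K ns i W" and v: "v \<in> vecs K ns i" "v \<notin> W"
  defines "S \<equiv> {vadd K i x y |x y. x \<in> W \<and> y \<in> vs.span {v}}"
  shows "is_subspace K ns i S" "vdim K i S = vdim K i W + 1" "W \<subseteq> S"
proof -
  obtain B where B: "B \<subseteq> W" "finite B" "vs.lin_indpt B" "vs.span B = W" "vdim K i W = card B"
    using subspace_basis[OF W] by blast
  have B_vecs: "B \<subseteq> vecs K ns i"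
    using B(1) is_subspace_subset[OF W] by blast
  have vB: "v \<notin> B"
    using v(2) B(1) by blast
  have S: "S = vs.span (insert v B)"
    using span_plus_line[OF B_vecs B(2) v(1) vB] B(4) by (simp add: S_def)
  have "W \<subseteq> vs.span (insert v B)"
    using B(4) vs.span_is_monotone[of B "insert v B"] by blast
  moreover have "vs.lin_indpt (insert v B)"
    using lin_indpt_insert[OF B_vecs B(3) v(1)] v(2) B(4) by simp
  ultimately show "is_subspace K ns i S" "vdim K i S = vdim K i W + 1" "W \<subseteq> S"
    using S B_vecs v(1) is_subspace_span vdim_span[of "insert v B"] B(2,5) vB by simp_all
qed

end

section \<open>Profiles growing in unit steps\<close>

definition unit_steps :: "(nat \<Rightarrow> nat) \<Rightarrow> nat \<Rightarrow> bool" where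
  "unit_steps a N \<longleftrightarrow> (\<forall>t<N. a t \<le> a (Suc t) \<and> a (Suc t) \<le> Suc (a t))"

definition jumps :: "(nat \<Rightarrow> nat) \<Rightarrow> nat \<Rightarrow> nat set" where
  "jumps a N = {t \<in> {1..N}. a t = Suc (a (t - 1))}"

lemma unit_stepsD:
  "unit_steps a N \<Longrightarrow> t < N \<Longrightarrow> a t \<le> a (Suc t)"
  "unit_steps a N \<Longrightarrow> t < N \<Longrightarrow> a (Suc t) \<le> Suc (a t)"
  by (simp_all add: unit_steps_def)

lemma unit_steps_mono:
  assumes "unit_steps a N" "s \<le> t" "t \<le> N"
  shows "a s \<le> a t"
  using assms(2,3)
proof (induction t)
  case (Suc t)
  then show ?case
    using unit_stepsD(1)[OF assms(1), of t] by (cases "s = Suc t") auto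
qed simp

lemma unit_steps_le_add:
  assumes "unit_steps a N" "s \<le> t" "t \<le> N"
  shows "a t \<le> a s + (t - s)"
  using assms(2,3)
proof (induction t)
  case (Suc t)
  then show ?case
    using unit_stepsD(2)[OF assms(1), of t] by (cases "s = Suc t") auto
qed simp

lemma first_reach:
  assumes a: "unit_steps a N" "a 0 = 0" and r: "1 \<le> r" "r \<le> a N"
  defines "t \<equiv> LEAST t. r \<le> a t"
  shows "1 \<le> t" "t \<le> N" "a t = r" "a (t - 1) = r - 1"
proof -
  have "r \<le> a t"
    unfolding t_def using r(2) by (rule LeastI)
  moreover show "t \<le> N"
    unfolding t_def using r(2) by (rule Least_le)
  moreover show "1 \<le> t"
    using \<open>r \<le> a t\<close> a(2) r(1) by (cases t) auto
  moreover have "\<not> r \<le> a (t - 1)"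
    using \<open>1 \<le> t\<close> not_less_Least[of "t - 1" "\<lambda>t. r \<le> a t"] by (simp add: t_def)
  moreover have "a t \<le> Suc (a (t - 1))"
    using unit_stepsD(2)[OF a(1), of "t - 1"] \<open>1 \<le> t\<close> \<open>t \<le> N\<close> by simp
  ultimately show "a t = r" "a (t - 1) = r - 1"
    by linarith+
qed

lemma first_reach_jump:
  assumes a: "unit_steps a N" and t: "t \<in> jumps a N"
  shows "(LEAST s. a t \<le> a s) = t"
proof (rule Least_equality)
  fix s assume "a t \<le> a s"
  show "t \<le> s"
  proof (rule ccontr)
    assume "\<not> t \<le> s"
    then have "a s \<le> a (t - 1)"
      using t unit_steps_mono[OF a, of s "t - 1"] by (auto simp: jumps_def)
    then show False
      using \<open>a t \<le> a s\<close> t by (simp add: jumps_def)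
  qed
qed simp

lemma Min_levels_eq_jumps:
  fixes rk nu :: "'x \<Rightarrow> nat"
  assumes a: "unit_steps a N" "a 0 = 0"
    and bound: "\<And>x. x \<in> S \<Longrightarrow> rk x \<le> N \<and> nu x \<le> a (rk x)"
    and attained: "\<And>t. t \<le> N \<Longrightarrow> \<exists>x\<in>S. rk x = t \<and> nu x = a t"
  shows "(\<lambda>r. Min {rk x |x. x \<in> S \<and> nu x = r}) ` {1..a N} = jumps a N"
proof -
  have Min_eq: "Min {rk x |x. x \<in> S \<and> nu x = r} = (LEAST t. r \<le> a t)" if r: "r \<in> {1..a N}" for r
  proof (rule Min_eqI)
    show "finite {rk x |x. x \<in> S \<and> nu x = r}"
      by (rule finite_subset[of _ "{..N}"]) (use bound in auto)
    have "a (LEAST t. r \<le> a t) = r" "(LEAST t. r \<le> a t) \<le> N"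
      using first_reach[OF a, of r] r by simp_all
    then obtain x where "x \<in> S" "rk x = (LEAST t. r \<le> a t)" "nu x = r"
      using attained[of "LEAST t. r \<le> a t"] by auto
    then show "(LEAST t. r \<le> a t) \<in> {rk x |x. x \<in> S \<and> nu x = r}"
      by (intro CollectI exI[of _ x]) simp
    fix y assume "y \<in> {rk x |x. x \<in> S \<and> nu x = r}"
    then obtain x where "x \<in> S" "nu x = r" "y = rk x"
      by blast
    then have "r \<le> a y"
      using bound[of x] by simp
    then show "(LEAST t. r \<le> a t) \<le> y"
      by (rule Least_le)
  qed
  show ?thesis
  proof (intro equalityI subsetI)
    fix t assume "t \<in> (\<lambda>r. Min {rk x |x. x \<in> S \<and> nu x = r}) ` {1..a N}"
    then obtain r where "r \<in> {1..a N}" "t = (LEAST t. r \<le> a t)"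
      using Min_eq by auto
    then show "t \<in> jumps a N"
      using first_reach[OF a, of r] by (auto simp: jumps_def)
  next
    fix t assume t: "t \<in> jumps a N"
    then have "a t \<in> {1..a N}"
      using unit_steps_mono[OF a(1), of t N] by (auto simp: jumps_def)
    moreover have "t = Min {rk x |x. x \<in> S \<and> nu x = a t}"
      using Min_eq[OF calculation] first_reach_jump[OF a(1) t] by simp
    ultimately show "t \<in> (\<lambda>r. Min {rk x |x. x \<in> S \<and> nu x = r}) ` {1..a N}"
      by (rule rev_image_eqI)
  qed
qed

text \<open>The nullity of the dual at \<open>L\<close> is \<open>Rk L + \<eta>(L\<^sup>\<perp>) - \<eta>(full)\<close> and
  \<open>Rk L\<^sup>\<perp> = N - Rk L\<close>; this is the resulting profile.\<close>

definition dual_profile :: "(nat \<Rightarrow> nat) \<Rightarrow> nat \<Rightarrow> nat \<Rightarrow> nat" where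
  "dual_profile a N t = t + a (N - t) - a N"

lemma dual_profile_step:
  assumes a: "unit_steps a N" and t: "t < N"
  shows "dual_profile a N (Suc t) + a (N - t) = Suc (dual_profile a N t) + a (N - Suc t)"
proof -
  have "a N \<le> a (N - t) + t" "a N \<le> a (N - Suc t) + Suc t"
    using unit_steps_le_add[OF a, of "N - t" N] unit_steps_le_add[OF a, of "N - Suc t" N] t
    by simp_all
  then show ?thesis
    by (simp add: dual_profile_def)
qed

lemma unit_steps_dual_profile:
  assumes a: "unit_steps a N"
  shows "unit_steps (dual_profile a N) N"
  unfolding unit_steps_def
proof (intro allI impI)
  fix t assume t: "t < N"
  have "a (N - Suc t) \<le> a (N - t)" "a (N - t) \<le> Suc (a (N - Suc t))"
    using unit_stepsD[OF a, of "N - Suc t"] t by (simp_all add: Suc_diff_Suc)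
  then show "dual_profile a N t \<le> dual_profile a N (Suc t) \<and>
      dual_profile a N (Suc t) \<le> Suc (dual_profile a N t)"
    using dual_profile_step[OF a t] by linarith
qed

lemma jump_dual_profile_iff:
  assumes a: "unit_steps a N" and t: "t \<in> {1..N}"
  shows "t \<in> jumps (dual_profile a N) N \<longleftrightarrow> N + 1 - t \<notin> jumps a N"
proof -
  define s where "s = N - t"
  have s: "s < N" "t = Suc (t - 1)" "N + 1 - t = Suc s"
    using t by (auto simp: s_def)
  have "a s \<le> a (Suc s)" "a (Suc s) \<le> Suc (a s)"
    using unit_stepsD[OF a s(1)] by simp_all
  moreover have "dual_profile a N t + a (Suc s) = Suc (dual_profile a N (t - 1)) + a s"
    using dual_profile_step[OF a, of "t - 1"] t s by (simp add: s_def Suc_diff_Suc)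
  ultimately show ?thesis
    using t s by (auto simp: jumps_def)
qed

lemma Diff_reflect_image:
  fixes N :: nat
  assumes "J \<subseteq> {1..N}"
  shows "{1..N} - (\<lambda>t. N + 1 - t) ` J = {t \<in> {1..N}. N + 1 - t \<notin> J}"
proof (intro equalityI subsetI)
  fix t assume t: "t \<in> {1..N} - (\<lambda>t. N + 1 - t) ` J"
  have "N + 1 - t \<notin> J"
  proof
    assume "N + 1 - t \<in> J"
    then have "N + 1 - (N + 1 - t) \<in> (\<lambda>t. N + 1 - t) ` J"
      by (rule imageI)
    moreover have "N + 1 - (N + 1 - t) = t"
      using t by simp
    ultimately show False
      using t by simp
  qed
  with t show "t \<in> {t \<in> {1..N}. N + 1 - t \<notin> J}"
    by blast
next
  fix t assume t: "t \<in> {t \<in> {1..N}. N + 1 - t \<notin> J}"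
  have "t \<notin> (\<lambda>t. N + 1 - t) ` J"
  proof
    assume "t \<in> (\<lambda>t. N + 1 - t) ` J"
    then obtain s where "s \<in> J" "t = N + 1 - s"
      by blast
    with assms t show False
      by auto
  qed
  with t show "t \<in> {1..N} - (\<lambda>t. N + 1 - t) ` J"
    by blast
qed

lemma jumps_dual_profile:
  assumes a: "unit_steps a N"
  shows "jumps (dual_profile a N) N = {1..N} - (\<lambda>t. N + 1 - t) ` jumps a N"
proof -
  have "jumps (dual_profile a N) N \<subseteq> {1..N}"
    by (auto simp: jumps_def)
  then have "jumps (dual_profile a N) N = {t \<in> {1..N}. N + 1 - t \<notin> jumps a N}"
    using jump_dual_profile_iff[OF a] by blast
  also have "\<dots> = {1..N} - (\<lambda>t. N + 1 - t) ` jumps a N"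
    by (rule Diff_reflect_image[symmetric]) (auto simp: jumps_def)
  finally show ?thesis .
qed

section \<open>The lattice P(K^n)\<close>

definition lzero :: "(nat \<Rightarrow> 'a ring) \<Rightarrow> nat \<Rightarrow> nat \<Rightarrow> (nat \<Rightarrow> 'a) set" where
  "lzero K l = (\<lambda>i. if i < l then {zvec K i} else {})"

locale subspace_lattice =
  fixes K :: "nat \<Rightarrow> 'a ring" and l :: nat and ns :: "nat \<Rightarrow> nat"
  assumes field_factors: "\<And>i. i < l \<Longrightarrow> field (K i)"
begin

abbreviation total_dim :: nat where
  "total_dim \<equiv> \<Sum>i<l. ns i"

lemma factor_space: "i < l \<Longrightarrow> factor_space K i"
  by (rule factor_space.intro[OF field_factors])

lemma LatD:
  assumes "L \<in> Lat K l ns"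
  shows "i < l \<Longrightarrow> is_subspace K ns i (L i)" and "l \<le> i \<Longrightarrow> L i = {}"
  using assms by (simp_all add: Lat_def)

lemma Lat_update:
  "L \<in> Lat K l ns \<Longrightarrow> i < l \<Longrightarrow> is_subspace K ns i W \<Longrightarrow> L(i := W) \<in> Lat K l ns"
  by (simp add: Lat_def)

lemma Rk_update:
  assumes "i < l"
  shows "Rk K l (L(i := W)) + vdim K i (L i) = Rk K l L + vdim K i W"
proof -
  have "Rk K l (L(i := W)) = vdim K i W + (\<Sum>j\<in>{..<l} - {i}. vdim K j (L j))"
    using assms by (simp add: Rk_def sum.remove[of "{..<l}" i])
  moreover have "Rk K l L = vdim K i (L i) + (\<Sum>j\<in>{..<l} - {i}. vdim K j (L j))"
    using assms by (simp add: Rk_def sum.remove[of "{..<l}" i])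
  ultimately show ?thesis
    by simp
qed

lemma lzero_in_Lat: "lzero K l \<in> Lat K l ns"
  using factor_space.is_subspace_zero[OF factor_space] by (simp add: Lat_def lzero_def)

lemma Rk_lzero: "Rk K l (lzero K l) = 0"
  using factor_space.vdim_zero[OF factor_space] by (simp add: Rk_def lzero_def)

lemma fullspace_in_Lat: "fullspace K l ns \<in> Lat K l ns"
  using factor_space.is_subspace_vecs[OF factor_space] by (simp add: Lat_def fullspace_def)

lemma Rk_fullspace: "Rk K l (fullspace K l ns) = total_dim"
  using factor_space.vdim_vecs[OF factor_space] by (simp add: Rk_def fullspace_def)

lemma Rk_le_total_dim: "L \<in> Lat K l ns \<Longrightarrow> Rk K l L \<le> total_dim"
  unfolding Rk_def by (intro sum_mono factor_space.vdim_le[OF factor_space] LatD) simp_all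

lemma exists_proper_factor:
  assumes L: "L \<in> Lat K l ns" and ne: "L \<noteq> fullspace K l ns"
  obtains i where "i < l" "L i \<noteq> vecs K ns i"
proof -
  have "\<exists>i<l. L i \<noteq> vecs K ns i"
  proof (rule ccontr)
    assume "\<not> (\<exists>i<l. L i \<noteq> vecs K ns i)"
    then have "L = fullspace K l ns"
      using LatD(2)[OF L] by (auto simp: fullspace_def fun_eq_iff)
    with ne show False ..
  qed
  then show thesis
    using that by blast
qed

lemma eq_fullspace_if_Rk:
  assumes L: "L \<in> Lat K l ns" and Rk: "Rk K l L = total_dim"
  shows "L = fullspace K l ns"
proof (rule ccontr)
  assume "L \<noteq> fullspace K l ns"
  then obtain i where i: "i < l" "L i \<noteq> vecs K ns i"
    using exists_proper_factor[OF L] by blast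
  have "vdim K i (L i) \<noteq> ns i"
    using factor_space.subspace_eq_if_vdim_le[OF factor_space[OF i(1)] LatD(1)[OF L i(1)]
        factor_space.is_subspace_vecs[OF factor_space[OF i(1)]]]
      factor_space.is_subspace_subset[OF factor_space[OF i(1)] LatD(1)[OF L i(1)]]
      factor_space.vdim_vecs[OF factor_space[OF i(1)]] i(2)
    by auto
  then have "vdim K i (L i) < ns i"
    using factor_space.vdim_le[OF factor_space[OF i(1)] LatD(1)[OF L i(1)]] by simp
  then have "Rk K l L < total_dim"
    unfolding Rk_def using i(1) factor_space.vdim_le[OF factor_space] LatD(1)[OF L]
    by (intro sum_strict_mono_ex1) auto
  with Rk show False
    by simp
qed

lemma lperp_in_Lat: "L \<in> Lat K l ns \<Longrightarrow> lperp K l ns L \<in> Lat K l ns"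
  using factor_space.is_subspace_vperp[OF factor_space] factor_space.is_subspace_subset[OF factor_space]
  by (simp add: Lat_def lperp_def)

lemma Rk_lperp: "L \<in> Lat K l ns \<Longrightarrow> Rk K l (lperp K l ns L) + Rk K l L = total_dim"
  unfolding Rk_def sum.distrib[symmetric]
  using factor_space.vdim_vperp[OF factor_space LatD(1)] by (simp add: lperp_def)

lemma lperp_lperp:
  assumes "L \<in> Lat K l ns"
  shows "lperp K l ns (lperp K l ns L) = L"
  using factor_space.vperp_vperp[OF factor_space LatD(1)[OF assms]] LatD(2)[OF assms]
  by (auto simp: lperp_def fun_eq_iff)

lemma exists_lower_cover:
  assumes L: "L \<in> Lat K l ns" and pos: "0 < Rk K l L"
  obtains L' where "L' \<in> Lat K l ns" "lle L' L" "Rk K l L' + 1 = Rk K l L"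
proof -
  have "\<exists>i<l. 0 < vdim K i (L i)"
  proof (rule ccontr)
    assume "\<not> (\<exists>i<l. 0 < vdim K i (L i))"
    then have "Rk K l L = 0"
      by (simp add: Rk_def)
    with pos show False
      by simp
  qed
  then obtain i where i: "i < l" "0 < vdim K i (L i)"
    by blast
  then obtain W where W: "is_subspace K ns i W" "W \<subseteq> L i" "vdim K i W + 1 = vdim K i (L i)"
    using factor_space.exists_subspace_codim1[OF factor_space LatD(1)[OF L]] by blast
  have "L(i := W) \<in> Lat K l ns" "lle (L(i := W)) L" "Rk K l (L(i := W)) + 1 = Rk K l L"
    using Lat_update[OF L i(1) W(1)] W(2,3) Rk_update[OF i(1), of L W] by (auto simp: lle_def)
  then show thesis
    by (rule that)
qed

lemma linter_lzero_update:
  assumes L: "L \<in> Lat K l ns" and i: "i < l" and P: "L i \<inter> P = {zvec K i}"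
  shows "linter L ((lzero K l)(i := P)) = lzero K l"
proof
  fix j
  show "linter L ((lzero K l)(i := P)) j = lzero K l j"
  proof (cases "j = i")
    case True
    then show ?thesis
      using P i by (simp add: linter_def lzero_def)
  next
    case False
    moreover have "zvec K j \<in> L j" if "j < l"
      using LatD(1)[OF L that] by (simp add: is_subspace_def)
    ultimately show ?thesis
      using LatD(2)[OF L, of j] by (auto simp: linter_def lzero_def)
  qed
qed

lemma lsum_lzero_update:
  assumes L: "L \<in> Lat K l ns" and i: "i < l"
  shows "lsum K l L ((lzero K l)(i := P)) = L(i := {vadd K i x y |x y. x \<in> L i \<and> y \<in> P})"
proof
  fix j
  show "lsum K l L ((lzero K l)(i := P)) j = (L(i := {vadd K i x y |x y. x \<in> L i \<and> y \<in> P})) j"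
  proof (cases "j = i")
    case True
    then show ?thesis
      using i by (simp add: lsum_def)
  next
    case False
    moreover have "{vadd K j x y |x y. x \<in> L j \<and> y \<in> {zvec K j}} = L j" if "j < l"
      using factor_space.plus_zvec_eq[OF factor_space[OF that]]
        factor_space.is_subspace_subset[OF factor_space[OF that] LatD(1)[OF L that]]
      by blast
    ultimately show ?thesis
      using LatD(2)[OF L, of j] by (auto simp: lsum_def lzero_def)
  qed
qed

lemma exists_line_extension:
  assumes L: "L \<in> Lat K l ns" and less: "Rk K l L < total_dim"
  obtains P where "P \<in> Lat K l ns" "Rk K l P = 1" "linter L P = lzero K l"
    "lsum K l L P \<in> Lat K l ns" "Rk K l (lsum K l L P) = Rk K l L + 1"
proof -
  have "L \<noteq> fullspace K l ns"
    using Rk_fullspace less by auto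
  then obtain i where i: "i < l" "L i \<noteq> vecs K ns i"
    using exists_proper_factor[OF L] by blast
  interpret F: factor_space K ns i
    by (rule factor_space[OF i(1)])
  have Li: "is_subspace K ns i (L i)"
    by (rule LatD(1)[OF L i(1)])
  obtain v where v: "v \<in> vecs K ns i" "v \<notin> L i"
    using i(2) F.is_subspace_subset[OF Li] by blast
  define S where "S = {vadd K i x y |x y. x \<in> L i \<and> y \<in> F.vs.span {v}}"
  define P where "P = (lzero K l)(i := F.vs.span {v})"
  have "v \<noteq> zvec K i"
    using v(2) Li by (auto simp: is_subspace_def)
  have "P \<in> Lat K l ns"
    unfolding P_def using lzero_in_Lat i(1) v(1) by (intro Lat_update F.is_subspace_span) auto
  moreover have "Rk K l P = 1"
    using \<open>v \<noteq> zvec K i\<close> Rk_update[OF i(1), of "lzero K l" "F.vs.span {v}"] Rk_lzero F.vdim_line[OF v(1)]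
      F.vdim_zero i(1)
    by (simp add: P_def lzero_def)
  moreover have "linter L P = lzero K l"
    unfolding P_def using linter_lzero_update[OF L i(1) F.subspace_inter_line[OF Li v]] .
  moreover have "lsum K l L P = L(i := S)"
    unfolding P_def S_def by (rule lsum_lzero_update[OF L i(1)])
  moreover have "L(i := S) \<in> Lat K l ns" "Rk K l (L(i := S)) = Rk K l L + 1"
    using F.subspace_plus_line[OF Li v] Lat_update[OF L i(1)] Rk_update[OF i(1), of L S]
    by (simp_all add: S_def)
  ultimately show thesis
    using that by simp
qed

lemma exists_Lat_of_Rk: "t \<le> total_dim \<Longrightarrow> \<exists>L\<in>Lat K l ns. Rk K l L = t"
proof (induction t)
  case 0
  then show ?case
    using lzero_in_Lat Rk_lzero by blast
next
  case (Suc t)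
  then obtain L where L: "L \<in> Lat K l ns" "Rk K l L = t"
    by auto
  then obtain P where "lsum K l L P \<in> Lat K l ns" "Rk K l (lsum K l L P) = t + 1"
    using exists_line_extension[of L] Suc.prems by auto
  then show ?case
    by auto
qed

end

definition max_nullity ::
    "(nat \<Rightarrow> 'a ring) \<Rightarrow> nat \<Rightarrow> (nat \<Rightarrow> nat) \<Rightarrow> ((nat \<Rightarrow> (nat \<Rightarrow> 'a) set) \<Rightarrow> nat) \<Rightarrow> nat \<Rightarrow> nat" where
  "max_nullity K l ns \<sigma> t = Max {nullity K l \<sigma> L |L. L \<in> Lat K l ns \<and> Rk K l L = t}"

context subspace_lattice
begin

lemma finite_nullities: "finite {nullity K l \<sigma> L |L. L \<in> Lat K l ns \<and> Rk K l L = t}"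
  by (rule finite_subset[of _ "{..t}"]) (auto simp: nullity_def)

lemma nullity_le_max_nullity:
  "L \<in> Lat K l ns \<Longrightarrow> nullity K l \<sigma> L \<le> max_nullity K l ns \<sigma> (Rk K l L)"
  unfolding max_nullity_def by (rule Max_ge[OF finite_nullities]) auto

lemma max_nullity_attained:
  assumes "t \<le> total_dim"
  shows "\<exists>L\<in>Lat K l ns. Rk K l L = t \<and> nullity K l \<sigma> L = max_nullity K l ns \<sigma> t"
proof -
  have "{nullity K l \<sigma> L |L. L \<in> Lat K l ns \<and> Rk K l L = t} \<noteq> {}"
    using exists_Lat_of_Rk[OF assms] by blast
  then have "max_nullity K l ns \<sigma> t \<in> {nullity K l \<sigma> L |L. L \<in> Lat K l ns \<and> Rk K l L = t}"
    unfolding max_nullity_def by (rule Max_in[OF finite_nullities])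
  then show ?thesis
    by auto
qed

lemma max_nullity_0: "max_nullity K l ns \<sigma> 0 = 0"
proof -
  obtain L where "Rk K l L = 0" "nullity K l \<sigma> L = max_nullity K l ns \<sigma> 0"
    using max_nullity_attained[of 0 \<sigma>] by auto
  then show ?thesis
    by (simp add: nullity_def)
qed

lemma gen_weight_image_eq_jumps:
  assumes "unit_steps a total_dim" "a 0 = 0"
    and "\<And>L. L \<in> Lat K l ns \<Longrightarrow> nullity K l \<sigma> L \<le> a (Rk K l L)"
    and "\<And>t. t \<le> total_dim \<Longrightarrow> \<exists>L\<in>Lat K l ns. Rk K l L = t \<and> nullity K l \<sigma> L = a t"
  shows "gen_weight K l ns \<sigma> ` {1..a total_dim} = jumps a total_dim"
proof -
  have "gen_weight K l ns \<sigma> = (\<lambda>r. Min {Rk K l L |L. L \<in> Lat K l ns \<and> nullity K l \<sigma> L = r})"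
    by (simp add: gen_weight_def fun_eq_iff)
  then show ?thesis
    using Min_levels_eq_jumps[of a total_dim "Lat K l ns" "Rk K l" "nullity K l \<sigma>"]
      assms Rk_le_total_dim
    by simp
qed

end

section \<open>Sum-matroids and their duals\<close>

locale sum_matroid_lattice = subspace_lattice +
  fixes \<rho> :: "(nat \<Rightarrow> (nat \<Rightarrow> 'a) set) \<Rightarrow> nat"
  assumes sum_matroid: "sum_matroid K l ns \<rho>"
begin

lemma rank_le_Rk: "L \<in> Lat K l ns \<Longrightarrow> \<rho> L \<le> Rk K l L"
  using sum_matroid by (simp add: sum_matroid_def)

lemma rank_mono: "L \<in> Lat K l ns \<Longrightarrow> L' \<in> Lat K l ns \<Longrightarrow> lle L L' \<Longrightarrow> \<rho> L \<le> \<rho> L'"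
  using sum_matroid by (simp add: sum_matroid_def)

lemma rank_submodular:
  "L \<in> Lat K l ns \<Longrightarrow> L' \<in> Lat K l ns \<Longrightarrow> \<rho> (lsum K l L L') + \<rho> (linter L L') \<le> \<rho> L + \<rho> L'"
  using sum_matroid by (simp add: sum_matroid_def)

lemma rank_fullspace_le: "\<rho> (fullspace K l ns) \<le> total_dim"
  using rank_le_Rk[OF fullspace_in_Lat] Rk_fullspace by simp

lemma nullity_mono_line_extension:
  assumes L: "L \<in> Lat K l ns" and less: "Rk K l L < total_dim"
  obtains L' where "L' \<in> Lat K l ns" "Rk K l L' = Rk K l L + 1"
    "nullity K l \<rho> L \<le> nullity K l \<rho> L'"
proof -
  obtain P where P: "P \<in> Lat K l ns" "Rk K l P = 1" "linter L P = lzero K l"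
    "lsum K l L P \<in> Lat K l ns" "Rk K l (lsum K l L P) = Rk K l L + 1"
    using exists_line_extension[OF L less] by blast
  have "\<rho> (lsum K l L P) \<le> \<rho> L + 1"
    using rank_submodular[OF L P(1)] rank_le_Rk[OF P(1)] P(2) by simp
  then have "nullity K l \<rho> L \<le> nullity K l \<rho> (lsum K l L P)"
    using rank_le_Rk[OF L] P(5) by (simp add: nullity_def)
  with P(4,5) show thesis
    by (rule that)
qed

lemma nullity_lower_cover:
  assumes L: "L \<in> Lat K l ns" and pos: "0 < Rk K l L"
  obtains L' where "L' \<in> Lat K l ns" "Rk K l L' + 1 = Rk K l L"
    "nullity K l \<rho> L \<le> Suc (nullity K l \<rho> L')"
proof -
  obtain L' where L': "L' \<in> Lat K l ns" "lle L' L" "Rk K l L' + 1 = Rk K l L"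
    using exists_lower_cover[OF L pos] by blast
  have "\<rho> L' \<le> \<rho> L"
    by (rule rank_mono[OF L'(1) L L'(2)])
  then have "nullity K l \<rho> L \<le> Suc (nullity K l \<rho> L')"
    using rank_le_Rk[OF L] L'(3) by (simp add: nullity_def)
  with L'(1,3) show thesis
    by (rule that)
qed

lemma unit_steps_max_nullity: "unit_steps (max_nullity K l ns \<rho>) total_dim"
  unfolding unit_steps_def
proof (intro allI impI conjI)
  fix t assume t: "t < total_dim"
  obtain L where L: "L \<in> Lat K l ns" "Rk K l L = t" "nullity K l \<rho> L = max_nullity K l ns \<rho> t"
    using max_nullity_attained[of t] t by auto
  then obtain L' where "L' \<in> Lat K l ns" "Rk K l L' = Suc t" "nullity K l \<rho> L \<le> nullity K l \<rho> L'"
    using nullity_mono_line_extension[of L] t by auto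
  then show "max_nullity K l ns \<rho> t \<le> max_nullity K l ns \<rho> (Suc t)"
    using nullity_le_max_nullity[of L' \<rho>] L(3) by simp
next
  fix t assume t: "t < total_dim"
  obtain L where L: "L \<in> Lat K l ns" "Rk K l L = Suc t"
      "nullity K l \<rho> L = max_nullity K l ns \<rho> (Suc t)"
    using max_nullity_attained[of "Suc t"] t by auto
  then obtain L' where "L' \<in> Lat K l ns" "Rk K l L' = t" "nullity K l \<rho> L \<le> Suc (nullity K l \<rho> L')"
    using nullity_lower_cover[of L] by auto
  then show "max_nullity K l ns \<rho> (Suc t) \<le> Suc (max_nullity K l ns \<rho> t)"
    using nullity_le_max_nullity[of L' \<rho>] L(3) by simp
qed

lemma max_nullity_total_dim:
  "max_nullity K l ns \<rho> total_dim = total_dim - \<rho> (fullspace K l ns)"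
proof -
  obtain L where L: "L \<in> Lat K l ns" "Rk K l L = total_dim"
      "nullity K l \<rho> L = max_nullity K l ns \<rho> total_dim"
    using max_nullity_attained[of total_dim] by auto
  then have "L = fullspace K l ns"
    by (intro eq_fullspace_if_Rk)
  then show ?thesis
    using L by (simp add: nullity_def)
qed

lemma nullity_dual_rank:
  assumes L: "L \<in> Lat K l ns"
  shows "nullity K l (dual_rank K l ns \<rho>) L
    = Rk K l L + nullity K l \<rho> (lperp K l ns L) - max_nullity K l ns \<rho> total_dim"
proof -
  let ?M = "lperp K l ns L"
  have M: "?M \<in> Lat K l ns" "Rk K l ?M + Rk K l L = total_dim"
    using lperp_in_Lat[OF L] Rk_lperp[OF L] by simp_all
  have "nullity K l \<rho> ?M \<le> max_nullity K l ns \<rho> (Rk K l ?M)"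
    by (rule nullity_le_max_nullity[OF M(1)])
  also have "\<dots> \<le> max_nullity K l ns \<rho> total_dim"
    by (rule unit_steps_mono[OF unit_steps_max_nullity Rk_le_total_dim[OF M(1)] le_refl])
  finally have "nullity K l \<rho> ?M \<le> max_nullity K l ns \<rho> total_dim" .
  then show ?thesis
    using rank_le_Rk[OF M(1)] M(2) rank_fullspace_le
    by (simp add: nullity_def dual_rank_def max_nullity_total_dim)
qed

lemma dual_nullity_bound:
  assumes L: "L \<in> Lat K l ns"
  shows "nullity K l (dual_rank K l ns \<rho>) L
    \<le> dual_profile (max_nullity K l ns \<rho>) total_dim (Rk K l L)"
proof -
  have "Rk K l (lperp K l ns L) = total_dim - Rk K l L"
    using Rk_lperp[OF L] by simp
  then have "nullity K l \<rho> (lperp K l ns L) \<le> max_nullity K l ns \<rho> (total_dim - Rk K l L)"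
    using nullity_le_max_nullity[OF lperp_in_Lat[OF L]] by simp
  then show ?thesis
    using nullity_dual_rank[OF L] by (simp add: dual_profile_def)
qed

lemma dual_nullity_attained:
  assumes t: "t \<le> total_dim"
  shows "\<exists>L\<in>Lat K l ns. Rk K l L = t \<and>
    nullity K l (dual_rank K l ns \<rho>) L = dual_profile (max_nullity K l ns \<rho>) total_dim t"
proof -
  obtain M where M: "M \<in> Lat K l ns" "Rk K l M = total_dim - t"
      "nullity K l \<rho> M = max_nullity K l ns \<rho> (total_dim - t)"
    using max_nullity_attained[of "total_dim - t"] by auto
  let ?L = "lperp K l ns M"
  have L: "?L \<in> Lat K l ns" "Rk K l ?L = t" "lperp K l ns ?L = M"
    using lperp_in_Lat[OF M(1)] Rk_lperp[OF M(1)] lperp_lperp[OF M(1)] M(2) t by simp_all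
  then have "nullity K l (dual_rank K l ns \<rho>) ?L = dual_profile (max_nullity K l ns \<rho>) total_dim t"
    using nullity_dual_rank[OF L(1)] M(3) by (simp add: dual_profile_def)
  with L(1,2) show ?thesis
    by blast
qed

lemma gen_weights_eq_jumps:
  "gen_weight K l ns \<rho> ` {1..total_dim - \<rho> (fullspace K l ns)} = jumps (max_nullity K l ns \<rho>) total_dim"
  using gen_weight_image_eq_jumps[OF unit_steps_max_nullity max_nullity_0
      nullity_le_max_nullity max_nullity_attained]
  by (simp add: max_nullity_total_dim)

lemma dual_gen_weights_eq:
  "gen_weight K l ns (dual_rank K l ns \<rho>) ` {1..\<rho> (fullspace K l ns)}
    = {1..total_dim} - (\<lambda>t. total_dim + 1 - t) ` jumps (max_nullity K l ns \<rho>) total_dim"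
proof -
  let ?A = "max_nullity K l ns \<rho>"
  have "dual_profile ?A total_dim 0 = 0" "dual_profile ?A total_dim total_dim = \<rho> (fullspace K l ns)"
    using max_nullity_total_dim max_nullity_0 rank_fullspace_le by (simp_all add: dual_profile_def)
  then show ?thesis
    using gen_weight_image_eq_jumps[OF unit_steps_dual_profile[OF unit_steps_max_nullity] _
        dual_nullity_bound dual_nullity_attained]
      jumps_dual_profile[OF unit_steps_max_nullity]
    by simp
qed

end

theorem mainTheorem10:
  fixes K :: "nat \<Rightarrow> 'a ring" and l :: nat and ns :: "nat \<Rightarrow> nat"
    and \<rho> :: "(nat \<Rightarrow> (nat \<Rightarrow> 'a) set) \<Rightarrow> nat"
  assumes "l \<ge> 1"
    and "\<And>i. i < l \<Longrightarrow> ns i \<ge> 1"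
    and "\<And>i. i < l \<Longrightarrow> field (K i)"
    and "\<And>i. i < l \<Longrightarrow> finite (carrier (K i))"
    and "sum_matroid K l ns \<rho>"
  defines "n \<equiv> (\<Sum>i<l. ns i)"
    and "k \<equiv> \<rho> (fullspace K l ns)"
  shows "{1..n} = (gen_weight K l ns (dual_rank K l ns \<rho>)) ` {1..k}
                  \<union> (\<lambda>i. n + 1 - gen_weight K l ns \<rho> i) ` {1..n - k}
    \<and> (gen_weight K l ns (dual_rank K l ns \<rho>)) ` {1..k}
        \<inter> (\<lambda>i. n + 1 - gen_weight K l ns \<rho> i) ` {1..n - k} = {}"
proof -
  interpret sum_matroid_lattice K l ns \<rho>
    using assms(3,5) by (simp add: sum_matroid_lattice_def sum_matroid_lattice_axioms_def subspace_lattice_def)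
  let ?reflect = "\<lambda>t. n + 1 - t" and ?J = "jumps (max_nullity K l ns \<rho>) n"
  have "(\<lambda>i. n + 1 - gen_weight K l ns \<rho> i) ` {1..n - k} = ?reflect ` ?J"
    using gen_weights_eq_jumps by (simp add: n_def k_def image_image[symmetric])
  moreover have "gen_weight K l ns (dual_rank K l ns \<rho>) ` {1..k} = {1..n} - ?reflect ` ?J"
    using dual_gen_weights_eq by (simp add: n_def k_def)
  moreover have "?reflect ` ?J \<subseteq> {1..n}"
    by (auto simp: jumps_def)
  ultimately show ?thesis
    by auto
qed

end
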